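(* Let $(X,d)$ be a compact metric space and $f:X\to X$ continuous. For each $\delta>0$ let $\mathcal D(\delta)=\{D_{i,j}:1\le i\le K,\ 0\le j\le m_i-1\}$ be a family of pairwise disjoint subsets of $CR(f)$ (with $K,m_i$ depending on $\delta$) satisfying: (D1) $CR(f)=\bigsqcup_{i,j}D_{i,j}$ and each $D_{i,j}$ is clopen in $CR(f)$; (D2) setting $D_{i,m_i}=D_{i,0}$, $f(D_{i,j})=D_{i,j+1}$ for all $i,j$; (D3) for any $x,y\in D_{i,j}$ there is $N>0$ such that for every integer $n\ge N$ there is a $\delta$-chain $(x_\eta)_{\eta=0}^k$ of $f$ in $CR(f)$ with $x_0=x$, $x_k=y$ and $k=m_in$. Then for any $x,y\in CR(f)$, $x\sim y$ if and only if for every $\delta>0$, $x$ and $y$ belong to the same member of $\mathcal D(\delta)$.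
   Context: For $\delta>0$, a finite sequence $(x_i)_{i=0}^k$ ($k\ge1$) is a $\delta$-chain of $f$ if $d(f(x_i),x_{i+1})\le\delta$ for $0\le i\le k-1$; it is a $\delta$-cycle if moreover $x_0=x_k$. $CR(f)$ is the set of points $x$ such that for every $\delta>0$ there is a $\delta$-cycle starting and ending at $x$. For $x,y\in CR(f)$, $x\sim y$ iff for every $\delta>0$ there are integers $m>0$, $N>0$ such that for every integer $n\ge N$ there are $\delta$-chains $(x_i)_{i=0}^{mn},(y_i)_{i=0}^{mn}$ of $f$ consisting of points of $CR(f)$ with $x_0=y_{mn}=x$ and $x_{mn}=y_0=y$. (Families satisfying (D1)–(D3) exist for every $\delta>0$.) *)

theory Defs
  imports "HOL-Analysis.Analysis"
begin

text \<open>The compact metric space X is a compact subset S of a metric type; f maps S into S.\<close>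

definition dchain :: "('a::metric_space \<Rightarrow> 'a) \<Rightarrow> real \<Rightarrow> 'a set \<Rightarrow> (nat \<Rightarrow> 'a) \<Rightarrow> nat \<Rightarrow> bool" where
  "dchain f \<delta> A c k \<longleftrightarrow> k \<ge> 1 \<and> (\<forall>i\<le>k. c i \<in> A) \<and> (\<forall>i<k. dist (f (c i)) (c (Suc i)) \<le> \<delta>)"

definition CR :: "'a::metric_space set \<Rightarrow> ('a \<Rightarrow> 'a) \<Rightarrow> 'a set" where
  "CR S f = {x \<in> S. \<forall>\<delta>>0. \<exists>c k. dchain f \<delta> S c k \<and> c 0 = x \<and> c k = x}"

definition cr_equiv :: "'a::metric_space set \<Rightarrow> ('a \<Rightarrow> 'a) \<Rightarrow> 'a \<Rightarrow> 'a \<Rightarrow> bool" where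
  "cr_equiv S f x y \<longleftrightarrow> x \<in> CR S f \<and> y \<in> CR S f \<and>
     (\<forall>\<delta>>0. \<exists>m>0. \<exists>N>0. \<forall>n\<ge>N. \<exists>cx cy.
        dchain f \<delta> (CR S f) cx (m * n) \<and> dchain f \<delta> (CR S f) cy (m * n) \<and>
        cx 0 = x \<and> cx (m * n) = y \<and> cy 0 = y \<and> cy (m * n) = x)"

end

theory Submission
  imports Defs
begin

text \<open>Fix \<open>\<delta>\<close> and the member \<open>D\<^sub>i\<^sub>,\<^sub>j\<close> containing \<open>x\<close>. The sets \<open>D\<^sub>i\<^sub>,\<^sub>0, \<dots>, D\<^sub>i\<^sub>,\<^sub>m\<^sub>i\<^sub>-\<^sub>1\<close> are
  clopen in the compact set \<open>CR(f)\<close>, hence uniformly separated, so an \<open>\<epsilon>\<close>-chain in \<open>CR(f)\<close>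
  with \<open>\<epsilon>\<close> small cannot leave the cycle and must follow \<open>f(D\<^sub>i\<^sub>,\<^sub>j) = D\<^sub>i\<^sub>,\<^sub>j\<^sub>+\<^sub>1\<close>. If \<open>x \<sim> y\<close>,
  there is such a chain from \<open>x\<close> to \<open>y\<close> whose length is a multiple of \<open>m\<^sub>i\<close>, so it ends in
  \<open>D\<^sub>i\<^sub>,\<^sub>j\<close>. Conversely, (D3) applied in both directions yields the chains required by \<open>\<sim>\<close>
  with period \<open>m\<^sub>i\<close>.\<close>

lemma clopenin_uniform_nbhd:
  fixes T C :: "'a::metric_space set"
  assumes "compact T" and "openin (top_of_set T) C" and "closedin (top_of_set T) C"
  shows "\<exists>\<epsilon>>0. \<forall>a\<in>C. \<forall>b\<in>T. dist a b \<le> \<epsilon> \<longrightarrow> b \<in> C"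
proof (cases "C = {} \<or> T - C = {}")
  case False
  have "closedin (top_of_set T) (T - C)"
    using assms(2) by (metis closedin_diff closedin_topspace topspace_euclidean_subtopology)
  with assms have "compact C" "compact (T - C)"
    by (simp_all add: closedin_compact_eq)
  then have "setdist C (T - C) > 0"
    using False setdist_gt_0_compact_closed compact_imp_closed by blast
  moreover have "b \<in> C" if "a \<in> C" "b \<in> T" "dist a b \<le> setdist C (T - C) / 2" for a b
    using that setdist_le_dist[of a C b "T - C"] \<open>setdist C (T - C) > 0\<close> by force
  ultimately show ?thesis
    by (metis half_gt_zero)
qed (use zero_less_one in blast)

lemma clopenin_family_uniform_nbhd:
  fixes T :: "'a::metric_space set" and E :: "nat \<Rightarrow> 'a set"
  assumes "compact T"
    and "\<And>j. j < M \<Longrightarrow> openin (top_of_set T) (E j) \<and> closedin (top_of_set T) (E j)"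
  shows "\<exists>\<epsilon>>0. \<forall>j<M. \<forall>a\<in>E j. \<forall>b\<in>T. dist a b \<le> \<epsilon> \<longrightarrow> b \<in> E j"
  using assms(2)
proof (induction M)
  case (Suc M)
  obtain \<epsilon> where "\<epsilon> > 0" and \<epsilon>: "\<forall>j<M. \<forall>a\<in>E j. \<forall>b\<in>T. dist a b \<le> \<epsilon> \<longrightarrow> b \<in> E j"
    using Suc by auto
  obtain \<epsilon>' where "\<epsilon>' > 0" and \<epsilon>': "\<forall>a\<in>E M. \<forall>b\<in>T. dist a b \<le> \<epsilon>' \<longrightarrow> b \<in> E M"
    using clopenin_uniform_nbhd[OF \<open>compact T\<close>] Suc.prems by blast
  have "\<forall>j<Suc M. \<forall>a\<in>E j. \<forall>b\<in>T. dist a b \<le> min \<epsilon> \<epsilon>' \<longrightarrow> b \<in> E j"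
    using \<epsilon> \<epsilon>' by (auto simp: less_Suc_eq)
  moreover have "min \<epsilon> \<epsilon>' > 0"
    using \<open>\<epsilon> > 0\<close> \<open>\<epsilon>' > 0\<close> by simp
  ultimately show ?case
    by blast
qed (use zero_less_one in blast)

lemma dchain_follows_cycle:
  assumes "M > 0" and maps: "\<And>j. j < M \<Longrightarrow> f ` E j \<subseteq> E (Suc j mod M)"
    and nbhd: "\<And>j a b. j < M \<Longrightarrow> a \<in> E j \<Longrightarrow> b \<in> A \<Longrightarrow> dist a b \<le> \<epsilon> \<Longrightarrow> b \<in> E j"
    and chain: "dchain f \<epsilon> A c k" and "c 0 \<in> E j" "j < M" and "t \<le> k"
  shows "c t \<in> E ((j + t) mod M)"
  using \<open>t \<le> k\<close>
proof (induction t)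
  case 0
  then show ?case using \<open>c 0 \<in> E j\<close> \<open>j < M\<close> by simp
next
  case (Suc t)
  then have "c t \<in> E ((j + t) mod M)" by simp
  then have "f (c t) \<in> E ((j + Suc t) mod M)"
    using maps[of "(j + t) mod M"] \<open>M > 0\<close> by (auto simp: mod_Suc_eq)
  moreover have "c (Suc t) \<in> A" "dist (f (c t)) (c (Suc t)) \<le> \<epsilon>"
    using chain Suc.prems unfolding dchain_def by auto
  ultimately show ?case
    using nbhd \<open>M > 0\<close> by simp
qed

lemma CR_subset: "CR S f \<subseteq> S"
  by (auto simp: CR_def)

lemma dchain_rebase_cycle:
  assumes chain: "dchain f e A c k" and "c 0 = z" "c k = z" and "x \<in> A"
    and "dist x z \<le> e'" and "dist (f x) (f z) \<le> e'"
  shows "dchain f (e + 2 * e') A (c(0 := x, k := x)) k"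
  unfolding dchain_def
proof (intro conjI allI impI)
  let ?c = "c(0 := x, k := x)"
  have "0 \<le> e'"
    using \<open>dist x z \<le> e'\<close> zero_le_dist order_trans by blast
  then have near: "dist (c i) (?c i) \<le> e'" "dist (f (?c i)) (f (c i)) \<le> e'" for i
    using assms by (auto simp: dist_commute)
  show "1 \<le> k" "\<And>i. i \<le> k \<Longrightarrow> ?c i \<in> A"
    using chain \<open>x \<in> A\<close> by (auto simp: dchain_def)
  fix i assume "i < k"
  have "dist (f (?c i)) (?c (Suc i))
      \<le> dist (f (?c i)) (f (c i)) + dist (f (c i)) (c (Suc i)) + dist (c (Suc i)) (?c (Suc i))"
    by (meson dist_triangle order_trans add_right_mono)
  moreover have "dist (f (c i)) (c (Suc i)) \<le> e"
    using chain \<open>i < k\<close> by (auto simp: dchain_def)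
  ultimately show "dist (f (?c i)) (?c (Suc i)) \<le> e + 2 * e'"
    using near[of i] near[of "Suc i"] by linarith
qed

lemma closed_CR:
  fixes S :: "'a::metric_space set"
  assumes "closed S" and cont: "continuous_on S f"
  shows "closed (CR S f)"
proof -
  have "x \<in> CR S f" if x: "x \<in> closure (CR S f)" for x
  proof -
    have "x \<in> S"
      using x closure_mono[OF CR_subset] \<open>closed S\<close> by (metis closure_closed subsetD)
    have "\<exists>c k. dchain f \<delta> S c k \<and> c 0 = x \<and> c k = x" if "\<delta> > 0" for \<delta>
    proof -
      obtain r where "r > 0" and r: "\<forall>z\<in>S. dist z x < r \<longrightarrow> dist (f z) (f x) < \<delta>/3"
        using cont \<open>x \<in> S\<close> \<open>\<delta> > 0\<close> unfolding continuous_on_iff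
        by (metis divide_pos_pos zero_less_numeral)
      obtain z where z: "z \<in> CR S f" "dist z x < min r (\<delta>/3)"
        using x closure_approachable[of x "CR S f"] \<open>r > 0\<close> \<open>\<delta> > 0\<close>
        by (metis min_less_iff_conj zero_less_divide_iff zero_less_numeral)
      have "\<delta>/3 > 0"
        using \<open>\<delta> > 0\<close> by simp
      with z(1) obtain c k where "dchain f (\<delta>/3) S c k" "c 0 = z" "c k = z"
        unfolding CR_def by blast
      moreover note \<open>x \<in> S\<close>
      moreover have "dist x z \<le> \<delta>/3"
        using z by (simp add: dist_commute)
      moreover have "dist (f x) (f z) \<le> \<delta>/3"
        using z r CR_subset by (metis dist_commute less_imp_le min_less_iff_conj subsetD)
      \<comment> \<open>a \<open>\<delta>/3\<close>-cycle at the nearby point \<open>z\<close>, rebased at \<open>x\<close>\<close>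
      ultimately have "dchain f (\<delta>/3 + 2 * (\<delta>/3)) S (c(0 := x, k := x)) k"
        by (rule dchain_rebase_cycle)
      then show ?thesis by (intro exI[of _ "c(0 := x, k := x)"] exI[of _ k]) auto
    qed
    with \<open>x \<in> S\<close> show ?thesis by (auto simp: CR_def)
  qed
  then show ?thesis
    using closure_subset_eq by blast
qed

lemma compact_CR:
  assumes "compact S" and "continuous_on S f"
  shows "compact (CR S f)"
  using closed_CR[OF compact_imp_closed[OF assms(1)] assms(2)] assms(1) CR_subset
  by (metis compact_Int_closed inf.absorb2)

lemma cr_equiv_imp_same_cyclic_clopen:
  fixes S :: "'a::metric_space set" and E :: "nat \<Rightarrow> 'a set"
  assumes "compact S" and "continuous_on S f" and "M > 0"
    and clopen: "\<And>j. j < M \<Longrightarrow>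
      openin (top_of_set (CR S f)) (E j) \<and> closedin (top_of_set (CR S f)) (E j)"
    and maps: "\<And>j. j < M \<Longrightarrow> f ` E j \<subseteq> E (Suc j mod M)"
    and "cr_equiv S f x y" and "j < M" and "x \<in> E j"
  shows "y \<in> E j"
proof -
  obtain \<epsilon> where "\<epsilon> > 0" and \<epsilon>: "\<forall>j<M. \<forall>a\<in>E j. \<forall>b\<in>CR S f. dist a b \<le> \<epsilon> \<longrightarrow> b \<in> E j"
    using clopenin_family_uniform_nbhd[of "CR S f" M E] compact_CR[OF assms(1,2)] clopen by auto
  obtain p N where chains: "\<forall>n\<ge>N. \<exists>cx cy.
      dchain f \<epsilon> (CR S f) cx (p * n) \<and> dchain f \<epsilon> (CR S f) cy (p * n) \<and>
      cx 0 = x \<and> cx (p * n) = y \<and> cy 0 = y \<and> cy (p * n) = x"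
    using \<open>cr_equiv S f x y\<close> \<open>\<epsilon> > 0\<close> unfolding cr_equiv_def by blast
  \<comment> \<open>\<open>n = N * M\<close> makes the chain length a multiple of the period \<open>M\<close>\<close>
  have "N * M \<ge> N"
    using \<open>M > 0\<close> by simp
  then obtain c where c: "dchain f \<epsilon> (CR S f) c (p * (N * M))" "c 0 = x" "c (p * (N * M)) = y"
    using chains by blast
  have "c (p * (N * M)) \<in> E ((j + p * (N * M)) mod M)"
    using dchain_follows_cycle[where E = E, OF \<open>M > 0\<close> maps _ c(1)] \<epsilon> c(2) \<open>x \<in> E j\<close> \<open>j < M\<close>
    by blast
  moreover have "(j + p * (N * M)) mod M = j"
    using \<open>j < M\<close> by (metis mod_less mod_mult_self1 mult.assoc)
  ultimately show ?thesis
    using c(3) by simp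
qed

lemma cr_equivI_periodic_chains:
  assumes "x \<in> CR S f" and "y \<in> CR S f"
    and chains: "\<And>\<delta>. \<delta> > 0 \<Longrightarrow> \<exists>p>0.
      (\<exists>N. \<forall>n\<ge>N. \<exists>c. dchain f \<delta> (CR S f) c (p * n) \<and> c 0 = x \<and> c (p * n) = y) \<and>
      (\<exists>N. \<forall>n\<ge>N. \<exists>c. dchain f \<delta> (CR S f) c (p * n) \<and> c 0 = y \<and> c (p * n) = x)"
  shows "cr_equiv S f x y"
  unfolding cr_equiv_def
proof (intro conjI allI impI)
  fix \<delta> :: real assume "\<delta> > 0"
  then obtain p N1 N2 where "p > 0"
    and N1: "\<forall>n\<ge>N1. \<exists>c. dchain f \<delta> (CR S f) c (p * n) \<and> c 0 = x \<and> c (p * n) = y"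
    and N2: "\<forall>n\<ge>N2. \<exists>c. dchain f \<delta> (CR S f) c (p * n) \<and> c 0 = y \<and> c (p * n) = x"
    using chains by blast
  have "\<forall>n\<ge>Suc (max N1 N2). \<exists>cx cy.
      dchain f \<delta> (CR S f) cx (p * n) \<and> dchain f \<delta> (CR S f) cy (p * n) \<and>
      cx 0 = x \<and> cx (p * n) = y \<and> cy 0 = y \<and> cy (p * n) = x"
    using N1 N2 by (metis Suc_leD max.bounded_iff)
  with \<open>p > 0\<close> show "\<exists>m>0. \<exists>N>0. \<forall>n\<ge>N. \<exists>cx cy.
      dchain f \<delta> (CR S f) cx (m * n) \<and> dchain f \<delta> (CR S f) cy (m * n) \<and>
      cx 0 = x \<and> cx (m * n) = y \<and> cy 0 = y \<and> cy (m * n) = x"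
    using zero_less_Suc by blast
qed (use assms in auto)

theorem lemma3p2:
  fixes S :: "'a::metric_space set" and f :: "'a \<Rightarrow> 'a"
    and K :: "real \<Rightarrow> nat" and m :: "real \<Rightarrow> nat \<Rightarrow> nat"
    and D :: "real \<Rightarrow> nat \<Rightarrow> nat \<Rightarrow> 'a set"
  assumes "compact S" and "continuous_on S f" and "f ` S \<subseteq> S"
    and m_pos: "\<And>\<delta> i. \<delta> > 0 \<Longrightarrow> 1 \<le> i \<Longrightarrow> i \<le> K \<delta> \<Longrightarrow> m \<delta> i \<ge> 1"
    and disj: "\<And>\<delta> i j i' j'. \<delta> > 0 \<Longrightarrow> 1 \<le> i \<Longrightarrow> i \<le> K \<delta> \<Longrightarrow> j < m \<delta> i \<Longrightarrow>
        1 \<le> i' \<Longrightarrow> i' \<le> K \<delta> \<Longrightarrow> j' < m \<delta> i' \<Longrightarrow> (i, j) \<noteq> (i', j') \<Longrightarrow>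
        D \<delta> i j \<inter> D \<delta> i' j' = {}"
    and D1_cover: "\<And>\<delta>. \<delta> > 0 \<Longrightarrow>
        CR S f = (\<Union>{D \<delta> i j | i j. 1 \<le> i \<and> i \<le> K \<delta> \<and> j < m \<delta> i})"
    and D1_clopen: "\<And>\<delta> i j. \<delta> > 0 \<Longrightarrow> 1 \<le> i \<Longrightarrow> i \<le> K \<delta> \<Longrightarrow> j < m \<delta> i \<Longrightarrow>
        openin (top_of_set (CR S f)) (D \<delta> i j) \<and> closedin (top_of_set (CR S f)) (D \<delta> i j)"
    and D2: "\<And>\<delta> i j. \<delta> > 0 \<Longrightarrow> 1 \<le> i \<Longrightarrow> i \<le> K \<delta> \<Longrightarrow> j < m \<delta> i \<Longrightarrow>
        f ` (D \<delta> i j) = D \<delta> i (Suc j mod m \<delta> i)"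
    and D3: "\<And>\<delta> i j x y. \<delta> > 0 \<Longrightarrow> 1 \<le> i \<Longrightarrow> i \<le> K \<delta> \<Longrightarrow> j < m \<delta> i \<Longrightarrow>
        x \<in> D \<delta> i j \<Longrightarrow> y \<in> D \<delta> i j \<Longrightarrow>
        \<exists>N>0. \<forall>n\<ge>N. \<exists>c. dchain f \<delta> (CR S f) c (m \<delta> i * n) \<and> c 0 = x \<and> c (m \<delta> i * n) = y"
    and "x \<in> CR S f" and "y \<in> CR S f"
  shows "cr_equiv S f x y \<longleftrightarrow>
    (\<forall>\<delta>>0. \<exists>i j. 1 \<le> i \<and> i \<le> K \<delta> \<and> j < m \<delta> i \<and> x \<in> D \<delta> i j \<and> y \<in> D \<delta> i j)"
proof (intro iffI allI impI)
  fix \<delta> :: real assume "cr_equiv S f x y" and "\<delta> > 0"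
  then obtain i j where ij: "1 \<le> i" "i \<le> K \<delta>" "j < m \<delta> i" "x \<in> D \<delta> i j"
    using D1_cover \<open>x \<in> CR S f\<close> by blast
  have "y \<in> D \<delta> i j"
  proof (rule cr_equiv_imp_same_cyclic_clopen[where E = "D \<delta> i"])
    show "0 < m \<delta> i"
      using m_pos \<open>\<delta> > 0\<close> ij(1,2) by fastforce
  qed (use assms(1,2) \<open>cr_equiv S f x y\<close> ij \<open>\<delta> > 0\<close> D1_clopen D2 in auto)
  with ij show "\<exists>i j. 1 \<le> i \<and> i \<le> K \<delta> \<and> j < m \<delta> i \<and> x \<in> D \<delta> i j \<and> y \<in> D \<delta> i j"
    by blast
next
  assume same_piece: "\<forall>\<delta>>0. \<exists>i j. 1 \<le> i \<and> i \<le> K \<delta> \<and> j < m \<delta> i \<and> x \<in> D \<delta> i j \<and> y \<in> D \<delta> i j"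
  show "cr_equiv S f x y"
  proof (rule cr_equivI_periodic_chains[OF \<open>x \<in> CR S f\<close> \<open>y \<in> CR S f\<close>])
    fix \<delta> :: real assume "\<delta> > 0"
    with same_piece obtain i j where ij: "1 \<le> i" "i \<le> K \<delta>" "j < m \<delta> i" "x \<in> D \<delta> i j" "y \<in> D \<delta> i j"
      by blast
    have "m \<delta> i > 0"
      using m_pos \<open>\<delta> > 0\<close> ij(1,2) by fastforce
    with D3[OF \<open>\<delta> > 0\<close> ij(1-5)] D3[OF \<open>\<delta> > 0\<close> ij(1-3,5,4)] show "\<exists>p>0.
      (\<exists>N. \<forall>n\<ge>N. \<exists>c. dchain f \<delta> (CR S f) c (p * n) \<and> c 0 = x \<and> c (p * n) = y) \<and>
      (\<exists>N. \<forall>n\<ge>N. \<exists>c. dchain f \<delta> (CR S f) c (p * n) \<and> c 0 = y \<and> c (p * n) = x)"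
      by blast
  qed
qed

end
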